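(* Let $\Gamma>1$ and let $(\rho_L,u_L,v_L,p_L)$, $(\rho_R,u_R,v_R,p_R)$ be two states with $\rho_{L},\rho_R,p_L,p_R>0$ and $u_L^2+v_L^2<1$, $u_R^2+v_R^2<1$. Set $W=1/\sqrt{1-u^2-v^2}$ at each state and $z_1=\rho$, $z_2=\rho/p$, $z_3=u$, $z_4=v$. Write $L_x=\mathcal L_x(z_3,z_4)$, $L_y=\mathcal L_y(z_3,z_4)$, $\alpha=1+\frac{1}{(\Gamma-1)\{\!\{z_2\}\!\}^{\ln}}$ and \[ Q=\{\!\{z_2\}\!\}\{\!\{W\}\!\}^2+\{\!\{z_2\}\!\}\big(\{\!\{z_3\}\!\}\{\!\{W\}\!\}L_x-\{\!\{uW\}\!\}L_x+\{\!\{z_4\}\!\}\{\!\{W\}\!\}L_y-\{\!\{vW\}\!\}L_y\big). \] Define the $x$-directional flux $\tilde{\mathbf F}=(\tilde F_1,\tilde F_2,\tilde F_3,\tilde F_4)^T$ by \[ \tilde F_1=\{\!\{z_1\}\!\}^{\ln}\{\!\{uW\}\!\}, \] \[ \tilde F_2=Q^{-1}\Big\{\alpha\{\!\{z_2\}\!\}L_x\tilde F_1+\{\!\{z_1\}\!\}\big(\{\!\{W\}\!\}^2-\{\!\{vW\}\!\}L_y\big)+\{\!\{z_1\}\!\}\{\!\{W\}\!\}\big(\{\!\{z_3\}\!\}L_x+\{\!\{z_4\}\!\}L_y\big)\Big\}, \] \[ \tilde F_3=Q^{-1}\Big\{\alpha\{\!\{z_2\}\!\}L_y\tilde F_1+\{\!\{z_1\}\!\}\{\!\{uW\}\!\}L_y\Big\},\qquad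 \tilde F_4=\{\!\{W\}\!\}^{-1}\big(\alpha\tilde F_1+\{\!\{uW\}\!\}\tilde F_2+\{\!\{vW\}\!\}\tilde F_3\big), \] and the $y$-directional flux $\tilde{\mathbf G}=(\tilde G_1,\tilde G_2,\tilde G_3,\tilde G_4)^T$ by \[ \tilde G_1=\{\!\{z_1\}\!\}^{\ln}\{\!\{vW\}\!\},\qquad \tilde G_2=Q^{-1}\Big\{\alpha\{\!\{z_2\}\!\}L_x\tilde G_1+\{\!\{z_1\}\!\}\{\!\{vW\}\!\}L_x\Big\}, \] \[ \tilde G_3=Q^{-1}\Big\{\alpha\{\!\{z_2\}\!\}L_y\tilde G_1+\{\!\{z_1\}\!\}\big(\{\!\{W\}\!\}^2-\{\!\{uW\}\!\}L_x\big)+\{\!\{z_1\}\!\}\{\!\{W\}\!\}\big(\{\!\{z_3\}\!\}L_x+\{\!\{z_4\}\!\}L_y\big)\Big\}, \] \[ \tilde G_4=\{\!\{W\}\!\}^{-1}\big(\alpha\tilde G_1+\{\!\{uW\}\!\}\tilde G_2+\{\!\{vW\}\!\}\tilde G_3\big). \] Then $Q=\{\!\{z_2\}\!\}W_LW_R>0$, so both fluxes are well defined, and they satisfy the entropy conservation conditions \[ [\![\mathbf V]\!]^T\tilde{\mathbf F}=[\![\psi_x]\!],\qquad [\![\mathbf V]\!]^T\tilde{\mathbf G}=[\![\psi_y]\!]. \] Moreover both fluxes are consistent: if the left and right states coincide, then $\tilde{\mathbf F}=\mathbf F(\mathbf U)$ and $\tilde{\mathbf G}=\mathbf G(\mathbf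 U)$ at that state.
   Context: Two-dimensional special relativistic hydrodynamics (speed of light $1$) with ideal equation of state $p=(\Gamma-1)\rho e$: $\mathbf U=(D,m_x,m_y,E)^T$ with $D=\rho W$, $(m_x,m_y)=\rho hW^2(u,v)$, $E=\rho hW^2-p$, $W=1/\sqrt{1-u^2-v^2}$, $h=1+\Gamma p/((\Gamma-1)\rho)$; fluxes $\mathbf F=(Du,\,m_xu+p,\,m_yu,\,m_x)^T$, $\mathbf G=(Dv,\,m_xv,\,m_yv+p,\,m_y)^T$. With $S=\ln p-\Gamma\ln\rho$, the entropy variables are $\mathbf V=\big(\frac{\Gamma-S}{\Gamma-1}+\frac{\rho}{p},\ \frac{\rho Wu}{p},\ \frac{\rho Wv}{p},\ -\frac{\rho W}{p}\big)^T$ and the potentials are $\psi_x=\rho Wu$, $\psi_y=\rho Wv$ (corresponding to the entropy $\eta=-\rho WS/(\Gamma-1)$ with fluxes $q_x=-\rho uWS/(\Gamma-1)$, $q_y=-\rho vWS/(\Gamma-1)$). For a quantity $a$ with values $a_L,a_R$: $[\![a]\!]=a_R-a_L$, $\{\!\{a\}\!\}=(a_L+a_R)/2$ (e.g. $\{\!\{uW\}\!\}=(u_LW_L+u_RW_R)/2$), and for positive $a$ the logarithmic mean $\{\!\{a\}\!\}^{\ln}=[\![a]\!]/[\![\ln a]\!]$ if $a_L\ne a_R$, $=a_L$ if $a_L=a_R$. The Lorentz means are $\mathcal L_x(u,v)=\dfrac{u_L+u_R}{\sqrt{1-u_L^2-v_L^2}\sqrt{1-u_R^2-v_R^2}\big(\sqrt{1-u_L^2-v_L^2}+\sqrt{1-u_R^2-v_R^2}\big)}$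 and $\mathcal L_y(u,v)$ the same with numerator $v_L+v_R$; they satisfy $[\![W]\!]=\mathcal L_x[\![u]\!]+\mathcal L_y[\![v]\!]$. *)

theory Defs
  imports Complex_Main
begin

text \<open>Primitive states are given by (rho, u, v, p); speed of light is 1.\<close>

definition lorW :: "real \<Rightarrow> real \<Rightarrow> real" where
  "lorW u v = 1 / sqrt (1 - u\<^sup>2 - v\<^sup>2)"

definition jmp :: "real \<Rightarrow> real \<Rightarrow> real" where
  "jmp aL aR = aR - aL"

definition avg :: "real \<Rightarrow> real \<Rightarrow> real" where
  "avg aL aR = (aL + aR) / 2"

definition lnmean :: "real \<Rightarrow> real \<Rightarrow> real" where
  "lnmean aL aR = (if aL = aR then aL else (aR - aL) / (ln aR - ln aL))"

definition lorLx :: "real \<Rightarrow> real \<Rightarrow> real \<Rightarrow> real \<Rightarrow> real" where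
  "lorLx uL vL uR vR = (uL + uR) /
     (sqrt (1 - uL\<^sup>2 - vL\<^sup>2) * sqrt (1 - uR\<^sup>2 - vR\<^sup>2)
      * (sqrt (1 - uL\<^sup>2 - vL\<^sup>2) + sqrt (1 - uR\<^sup>2 - vR\<^sup>2)))"

definition lorLy :: "real \<Rightarrow> real \<Rightarrow> real \<Rightarrow> real \<Rightarrow> real" where
  "lorLy uL vL uR vR = (vL + vR) /
     (sqrt (1 - uL\<^sup>2 - vL\<^sup>2) * sqrt (1 - uR\<^sup>2 - vR\<^sup>2)
      * (sqrt (1 - uL\<^sup>2 - vL\<^sup>2) + sqrt (1 - uR\<^sup>2 - vR\<^sup>2)))"

definition entS :: "real \<Rightarrow> real \<Rightarrow> real \<Rightarrow> real" where
  "entS \<Gamma> \<rho> p = ln p - \<Gamma> * ln \<rho>"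

definition entV :: "real \<Rightarrow> real \<Rightarrow> real \<Rightarrow> real \<Rightarrow> real \<Rightarrow> real \<times> real \<times> real \<times> real" where
  "entV \<Gamma> \<rho> u v p =
     ((\<Gamma> - entS \<Gamma> \<rho> p) / (\<Gamma> - 1) + \<rho> / p,
      \<rho> * lorW u v * u / p,
      \<rho> * lorW u v * v / p,
      - (\<rho> * lorW u v / p))"

definition psix :: "real \<Rightarrow> real \<Rightarrow> real \<Rightarrow> real" where
  "psix \<rho> u v = \<rho> * lorW u v * u"

definition psiy :: "real \<Rightarrow> real \<Rightarrow> real \<Rightarrow> real" where
  "psiy \<rho> u v = \<rho> * lorW u v * v"

definition dot4 :: "real \<times> real \<times> real \<times> real \<Rightarrow> real \<times> real \<times> real \<times> real \<Rightarrow> real" where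
  "dot4 a b = (case a of (a1, a2, a3, a4) \<Rightarrow> case b of (b1, b2, b3, b4) \<Rightarrow>
      a1 * b1 + a2 * b2 + a3 * b3 + a4 * b4)"

definition jmp4 :: "real \<times> real \<times> real \<times> real \<Rightarrow> real \<times> real \<times> real \<times> real \<Rightarrow> real \<times> real \<times> real \<times> real" where
  "jmp4 a b = (case a of (a1, a2, a3, a4) \<Rightarrow> case b of (b1, b2, b3, b4) \<Rightarrow>
      (b1 - a1, b2 - a2, b3 - a3, b4 - a4))"

definition enth :: "real \<Rightarrow> real \<Rightarrow> real \<Rightarrow> real" where
  "enth \<Gamma> \<rho> p = 1 + \<Gamma> * p / ((\<Gamma> - 1) * \<rho>)"

definition fluxF :: "real \<Rightarrow> real \<Rightarrow> real \<Rightarrow> real \<Rightarrow> real \<Rightarrow> real \<times> real \<times> real \<times> real" where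
  "fluxF \<Gamma> \<rho> u v p =
    (let W = lorW u v; h = enth \<Gamma> \<rho> p; D = \<rho> * W;
         mx = \<rho> * h * W\<^sup>2 * u; my = \<rho> * h * W\<^sup>2 * v
     in (D * u, mx * u + p, my * u, mx))"

definition fluxG :: "real \<Rightarrow> real \<Rightarrow> real \<Rightarrow> real \<Rightarrow> real \<Rightarrow> real \<times> real \<times> real \<times> real" where
  "fluxG \<Gamma> \<rho> u v p =
    (let W = lorW u v; h = enth \<Gamma> \<rho> p; D = \<rho> * W;
         mx = \<rho> * h * W\<^sup>2 * u; my = \<rho> * h * W\<^sup>2 * v
     in (D * v, mx * v, my * v + p, my))"

definition Qm :: "real \<Rightarrow> real \<Rightarrow> real \<Rightarrow> real \<Rightarrow> real \<Rightarrow> real \<Rightarrow> real \<Rightarrow> real \<Rightarrow> real" where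
  "Qm \<rho>L uL vL pL \<rho>R uR vR pR =
    (let WL = lorW uL vL; WR = lorW uR vR;
         z2 = avg (\<rho>L / pL) (\<rho>R / pR); Wm = avg WL WR;
         z3 = avg uL uR; z4 = avg vL vR;
         uW = avg (uL * WL) (uR * WR); vW = avg (vL * WL) (vR * WR);
         Lx = lorLx uL vL uR vR; Ly = lorLy uL vL uR vR
     in z2 * Wm\<^sup>2 + z2 * (z3 * Wm * Lx - uW * Lx + z4 * Wm * Ly - vW * Ly))"

definition alphaM :: "real \<Rightarrow> real \<Rightarrow> real \<Rightarrow> real \<Rightarrow> real \<Rightarrow> real" where
  "alphaM \<Gamma> \<rho>L pL \<rho>R pR = 1 + 1 / ((\<Gamma> - 1) * lnmean (\<rho>L / pL) (\<rho>R / pR))"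

definition fluxFt :: "real \<Rightarrow> real \<Rightarrow> real \<Rightarrow> real \<Rightarrow> real \<Rightarrow> real \<Rightarrow> real \<Rightarrow> real \<Rightarrow> real \<Rightarrow> real \<times> real \<times> real \<times> real" where
  "fluxFt \<Gamma> \<rho>L uL vL pL \<rho>R uR vR pR =
    (let WL = lorW uL vL; WR = lorW uR vR;
         z1 = avg \<rho>L \<rho>R; z2 = avg (\<rho>L / pL) (\<rho>R / pR); Wm = avg WL WR;
         z3 = avg uL uR; z4 = avg vL vR;
         uW = avg (uL * WL) (uR * WR); vW = avg (vL * WL) (vR * WR);
         Lx = lorLx uL vL uR vR; Ly = lorLy uL vL uR vR;
         \<alpha> = alphaM \<Gamma> \<rho>L pL \<rho>R pR; Q = Qm \<rho>L uL vL pL \<rho>R uR vR pR;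
         F1 = lnmean \<rho>L \<rho>R * uW;
         F2 = (\<alpha> * z2 * Lx * F1 + z1 * (Wm\<^sup>2 - vW * Ly) + z1 * Wm * (z3 * Lx + z4 * Ly)) / Q;
         F3 = (\<alpha> * z2 * Ly * F1 + z1 * uW * Ly) / Q;
         F4 = (\<alpha> * F1 + uW * F2 + vW * F3) / Wm
     in (F1, F2, F3, F4))"

definition fluxGt :: "real \<Rightarrow> real \<Rightarrow> real \<Rightarrow> real \<Rightarrow> real \<Rightarrow> real \<Rightarrow> real \<Rightarrow> real \<Rightarrow> real \<Rightarrow> real \<times> real \<times> real \<times> real" where
  "fluxGt \<Gamma> \<rho>L uL vL pL \<rho>R uR vR pR =
    (let WL = lorW uL vL; WR = lorW uR vR;
         z1 = avg \<rho>L \<rho>R; z2 = avg (\<rho>L / pL) (\<rho>R / pR); Wm = avg WL WR;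
         z3 = avg uL uR; z4 = avg vL vR;
         uW = avg (uL * WL) (uR * WR); vW = avg (vL * WL) (vR * WR);
         Lx = lorLx uL vL uR vR; Ly = lorLy uL vL uR vR;
         \<alpha> = alphaM \<Gamma> \<rho>L pL \<rho>R pR; Q = Qm \<rho>L uL vL pL \<rho>R uR vR pR;
         G1 = lnmean \<rho>L \<rho>R * vW;
         G2 = (\<alpha> * z2 * Lx * G1 + z1 * vW * Lx) / Q;
         G3 = (\<alpha> * z2 * Ly * G1 + z1 * (Wm\<^sup>2 - uW * Lx) + z1 * Wm * (z3 * Lx + z4 * Ly)) / Q;
         G4 = (\<alpha> * G1 + uW * G2 + vW * G3) / Wm
     in (G1, G2, G3, G4))"

end

theory Submission
  imports Defs
begin

(*
  Products, logarithms and the Lorentz factor obey discrete chain rules: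
  [[a b]] = {{a}} [[b]] + {{b}} [[a]],  [[ln a]] = [[a]] / {{a}}^ln  and
  [[W]] = Lx [[u]] + Ly [[v]].  With them both sides of  [[V]]^T F = [[psi_x]]  become linear
  forms in the jumps of rho, rho/p, u and v.  Matching the coefficients of [[rho]] and
  [[rho/p]] yields F1 and F4; the coefficients of [[u]] and [[v]] give a 2x2 linear system
  for F2, F3 with determinant Q / {{rho/p}}, and  {{a}} {{b}} - {{a b}} = - [[a]] [[b]] / 4
  turns Q into {{rho/p}} W_L W_R.  The reflection u <-> v exchanges the two momentum
  components and turns the x-flux into the y-flux, so the y-statements follow from the
  x-statements.
*)

lemma avg_self [simp]: "avg x x = x"
  by (simp add: avg_def)

lemma lnmean_self [simp]: "lnmean x x = x"
  by (simp add: lnmean_def)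

lemma jmp_mult: "jmp (aL * bL) (aR * bR) = avg aL aR * jmp bL bR + avg bL bR * jmp aL aR"
  by (simp add: jmp_def avg_def field_simps)

lemma avg_avg_minus_avg_mult: "avg aL aR * avg bL bR - avg (aL * bL) (aR * bR) = - jmp aL aR * jmp bL bR / 4"
  by (simp add: jmp_def avg_def field_simps)

lemma avg_sq_minus_jmp_sq: "(avg aL aR)\<^sup>2 - (jmp aL aR)\<^sup>2 / 4 = aL * aR"
  by (simp add: jmp_def avg_def field_simps power2_eq_square)

lemma lnmean_pos:
  fixes x y :: real
  assumes "x > 0" "y > 0"
  shows "lnmean x y > 0"
proof (cases "x = y")
  case False
  then have "(y - x) / (ln y - ln x) > 0"
    using assms by (cases "x < y") (auto intro: divide_pos_pos divide_neg_neg)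
  then show ?thesis using False by (simp add: lnmean_def)
qed (simp add: lnmean_def assms)

lemma jmp_ln:
  fixes x y :: real
  assumes "x > 0" "y > 0"
  shows "jmp (ln x) (ln y) = jmp x y / lnmean x y"
  using assms by (simp add: jmp_def lnmean_def)

lemma lorW_pos: "u\<^sup>2 + v\<^sup>2 < 1 \<Longrightarrow> lorW u v > 0"
  by (simp add: lorW_def)

lemma lorW_swap: "lorW v u = lorW u v"
  by (simp add: lorW_def algebra_simps)

lemma lorLx_swap: "lorLx vL uL vR uR = lorLy uL vL uR vR"
  by (simp add: lorLx_def lorLy_def algebra_simps)

lemma lorLy_swap: "lorLy vL uL vR uR = lorLx uL vL uR vR"
  by (simp add: lorLx_def lorLy_def algebra_simps)

lemma jmp_lorW:
  assumes "uL\<^sup>2 + vL\<^sup>2 < 1" "uR\<^sup>2 + vR\<^sup>2 < 1"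
  shows "jmp (lorW uL vL) (lorW uR vR) = lorLx uL vL uR vR * jmp uL uR + lorLy uL vL uR vR * jmp vL vR"
proof -
  define sL where "sL = sqrt (1 - uL\<^sup>2 - vL\<^sup>2)"
  define sR where "sR = sqrt (1 - uR\<^sup>2 - vR\<^sup>2)"
  have pos: "sL > 0" "sR > 0"
    using assms by (simp_all add: sL_def sR_def)
  have "sL\<^sup>2 = 1 - uL\<^sup>2 - vL\<^sup>2" "sR\<^sup>2 = 1 - uR\<^sup>2 - vR\<^sup>2"
    using assms by (simp_all add: sL_def sR_def)
  then have key: "(uL + uR) * jmp uL uR + (vL + vR) * jmp vL vR = (sL - sR) * (sL + sR)"
    by (simp add: jmp_def algebra_simps power2_eq_square)
  have "lorLx uL vL uR vR * jmp uL uR + lorLy uL vL uR vR * jmp vL vR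
      = ((uL + uR) * jmp uL uR + (vL + vR) * jmp vL vR) / (sL * sR * (sL + sR))"
    unfolding lorLx_def lorLy_def sL_def [symmetric] sR_def [symmetric]
    by (simp add: add_divide_distrib [symmetric] times_divide_eq_left)
  also have "\<dots> = (sL - sR) / (sL * sR)"
    unfolding key using pos by simp
  also have "\<dots> = jmp (lorW uL vL) (lorW uR vR)"
    unfolding jmp_def lorW_def sL_def [symmetric] sR_def [symmetric] using pos
    by (simp add: field_simps)
  finally show ?thesis ..
qed

lemma lorLx_self:
  assumes "u\<^sup>2 + v\<^sup>2 < 1"
  shows "lorLx u v u v = u * (lorW u v)^3"
proof -
  define s where "s = sqrt (1 - u\<^sup>2 - v\<^sup>2)"
  have "s > 0" using assms by (simp add: s_def)
  then show ?thesis
    unfolding lorLx_def lorW_def s_def [symmetric] by (simp add: field_simps power3_eq_cube)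
qed

lemma lorLy_self:
  assumes "u\<^sup>2 + v\<^sup>2 < 1"
  shows "lorLy u v u v = v * (lorW u v)^3"
proof -
  define s where "s = sqrt (1 - u\<^sup>2 - v\<^sup>2)"
  have "s > 0" using assms by (simp add: s_def)
  then show ?thesis
    unfolding lorLy_def lorW_def s_def [symmetric] by (simp add: field_simps power3_eq_cube)
qed

lemma lorW_sq: "u\<^sup>2 + v\<^sup>2 < 1 \<Longrightarrow> (lorW u v)\<^sup>2 * (u\<^sup>2 + v\<^sup>2) = (lorW u v)\<^sup>2 - 1"
  by (simp add: lorW_def power_divide field_simps)

lemma Qm_eq:
  assumes "uL\<^sup>2 + vL\<^sup>2 < 1" "uR\<^sup>2 + vR\<^sup>2 < 1"
  shows "Qm \<rho>L uL vL pL \<rho>R uR vR pR = avg (\<rho>L / pL) (\<rho>R / pR) * lorW uL vL * lorW uR vR"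
proof -
  let ?z = "avg (\<rho>L / pL) (\<rho>R / pR)" and ?WL = "lorW uL vL" and ?WR = "lorW uR vR"
    and ?Lx = "lorLx uL vL uR vR" and ?Ly = "lorLy uL vL uR vR"
  have "Qm \<rho>L uL vL pL \<rho>R uR vR pR = ?z * ((avg ?WL ?WR)\<^sup>2
      + (avg uL uR * avg ?WL ?WR - avg (uL * ?WL) (uR * ?WR)) * ?Lx
      + (avg vL vR * avg ?WL ?WR - avg (vL * ?WL) (vR * ?WR)) * ?Ly)"
    unfolding Qm_def Let_def by (simp add: algebra_simps)
  also have "\<dots> = ?z * ((avg ?WL ?WR)\<^sup>2 - jmp ?WL ?WR * (?Lx * jmp uL uR + ?Ly * jmp vL vR) / 4)"
    unfolding avg_avg_minus_avg_mult by (simp add: algebra_simps)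
  also have "\<dots> = ?z * ((avg ?WL ?WR)\<^sup>2 - (jmp ?WL ?WR)\<^sup>2 / 4)"
    unfolding jmp_lorW [OF assms, symmetric] by (simp add: power2_eq_square)
  also have "\<dots> = ?z * ?WL * ?WR"
    by (simp add: avg_sq_minus_jmp_sq)
  finally show ?thesis .
qed

lemma Qm_pos:
  assumes "\<rho>L > 0" "\<rho>R > 0" "pL > 0" "pR > 0" "uL\<^sup>2 + vL\<^sup>2 < 1" "uR\<^sup>2 + vR\<^sup>2 < 1"
  shows "Qm \<rho>L uL vL pL \<rho>R uR vR pR > 0"
proof -
  have "lorW uL vL > 0" "lorW uR vR > 0"
    using assms(5,6) by (simp_all add: lorW_pos)
  then show ?thesis
    using assms(1-4) by (simp add: Qm_eq [OF assms(5,6)] avg_def mult_pos_pos add_pos_pos)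
qed

lemma jmp_entV1:
  fixes \<Gamma> \<rho>L pL \<rho>R pR :: real
  assumes "\<Gamma> > 1" "\<rho>L > 0" "\<rho>R > 0" "pL > 0" "pR > 0"
  shows "jmp ((\<Gamma> - entS \<Gamma> \<rho>L pL) / (\<Gamma> - 1) + \<rho>L / pL) ((\<Gamma> - entS \<Gamma> \<rho>R pR) / (\<Gamma> - 1) + \<rho>R / pR)
    = jmp \<rho>L \<rho>R / lnmean \<rho>L \<rho>R + alphaM \<Gamma> \<rho>L pL \<rho>R pR * jmp (\<rho>L / pL) (\<rho>R / pR)"
proof -
  have V1: "(\<Gamma> - entS \<Gamma> \<rho> p) / (\<Gamma> - 1) + \<rho> / p
      = ln \<rho> + (\<Gamma> + ln (\<rho> / p)) / (\<Gamma> - 1) + \<rho> / p" if "\<rho> > 0" "p > 0" for \<rho> p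
  proof -
    have "\<Gamma> - entS \<Gamma> \<rho> p = (\<Gamma> - 1) * ln \<rho> + (\<Gamma> + ln (\<rho> / p))"
      using that by (simp add: entS_def ln_div algebra_simps)
    also have "\<dots> / (\<Gamma> - 1) = ln \<rho> + (\<Gamma> + ln (\<rho> / p)) / (\<Gamma> - 1)"
      using assms(1) by (simp add: add_divide_distrib)
    finally show ?thesis by simp
  qed
  have "jmp ((\<Gamma> - entS \<Gamma> \<rho>L pL) / (\<Gamma> - 1) + \<rho>L / pL) ((\<Gamma> - entS \<Gamma> \<rho>R pR) / (\<Gamma> - 1) + \<rho>R / pR)
      = jmp (ln \<rho>L) (ln \<rho>R) + jmp (ln (\<rho>L / pL)) (ln (\<rho>R / pR)) / (\<Gamma> - 1) + jmp (\<rho>L / pL) (\<rho>R / pR)"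
    unfolding V1 [OF assms(2,4)] V1 [OF assms(3,5)] jmp_def by (simp add: diff_divide_distrib [symmetric])
  also have "\<dots> = jmp \<rho>L \<rho>R / lnmean \<rho>L \<rho>R
      + jmp (\<rho>L / pL) (\<rho>R / pR) / ((\<Gamma> - 1) * lnmean (\<rho>L / pL) (\<rho>R / pR)) + jmp (\<rho>L / pL) (\<rho>R / pR)"
    using assms by (simp add: jmp_ln)
  also have "\<dots> = jmp \<rho>L \<rho>R / lnmean \<rho>L \<rho>R + alphaM \<Gamma> \<rho>L pL \<rho>R pR * jmp (\<rho>L / pL) (\<rho>R / pR)"
    by (simp add: alphaM_def algebra_simps)
  finally show ?thesis .
qed

lemma jmp4_entV:
  fixes \<Gamma> \<rho>L uL vL pL \<rho>R uR vR pR :: real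
  assumes "\<Gamma> > 1" "\<rho>L > 0" "\<rho>R > 0" "pL > 0" "pR > 0"
  shows "jmp4 (entV \<Gamma> \<rho>L uL vL pL) (entV \<Gamma> \<rho>R uR vR pR) =
    (jmp \<rho>L \<rho>R / lnmean \<rho>L \<rho>R + alphaM \<Gamma> \<rho>L pL \<rho>R pR * jmp (\<rho>L / pL) (\<rho>R / pR),
     jmp (\<rho>L / pL * (uL * lorW uL vL)) (\<rho>R / pR * (uR * lorW uR vR)),
     jmp (\<rho>L / pL * (vL * lorW uL vL)) (\<rho>R / pR * (vR * lorW uR vR)),
     - jmp (\<rho>L / pL * lorW uL vL) (\<rho>R / pR * lorW uR vR))"
  using jmp_entV1 [OF assms] by (simp add: jmp4_def entV_def jmp_def mult_ac)

lemma entropy_conservative_flux_identity: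
  fixes z1 z2 Wm z3 z4 uW vW Lx Ly a \<alpha> Q F1 F2 F3 F4 d\<rho> dz du dv dW dWu dWv :: real
  assumes dW: "dW = Lx * du + Ly * dv"
    and dWu: "dWu = Wm * du + z3 * dW" and dWv: "dWv = Wm * dv + z4 * dW"
    and Q: "Q = z2 * Wm\<^sup>2 + z2 * (z3 * Wm * Lx - uW * Lx + z4 * Wm * Ly - vW * Ly)"
    and nz: "a \<noteq> 0" "z2 \<noteq> 0" "Wm \<noteq> 0" "Q \<noteq> 0"
    and F1: "F1 = a * uW"
    and F2: "F2 = (\<alpha> * z2 * Lx * F1 + z1 * (Wm\<^sup>2 - vW * Ly) + z1 * Wm * (z3 * Lx + z4 * Ly)) / Q"
    and F3: "F3 = (\<alpha> * z2 * Ly * F1 + z1 * uW * Ly) / Q"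
    and F4: "F4 = (\<alpha> * F1 + uW * F2 + vW * F3) / Wm"
  shows "dot4 (d\<rho> / a + \<alpha> * dz, z2 * dWu + uW * dz, z2 * dWv + vW * dz, - (z2 * dW + Wm * dz))
      (F1, F2, F3, F4) = z1 * dWu + uW * d\<rho>"
proof -
  define A where "A = Wm * dWu - uW * dW"
  define B where "B = Wm * dWv - vW * dW"
  define P where "P = Wm\<^sup>2 - vW * Ly + Wm * z3 * Lx + Wm * z4 * Ly"
  have QF2: "Q * F2 = \<alpha> * F1 * z2 * Lx + z1 * P"
    using nz(4) by (simp add: F2 P_def field_simps)
  have QF3: "Q * F3 = \<alpha> * F1 * z2 * Ly + z1 * uW * Ly"
    using nz(4) by (simp add: F3 field_simps)
  \<comment> \<open>\<open>F2\<close> and \<open>F3\<close> solve a 2x2 system with determinant \<open>Q / z2\<close>; these are its Cramer identities\<close>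
  have cramer_dW: "Lx * A + Ly * B = Q / z2 * dW"
    using nz(2) by (simp add: A_def B_def Q dWu dWv dW field_simps power2_eq_square)
  have cramer_dWu: "P * A + uW * Ly * B = Q / z2 * Wm * dWu"
    using nz(2) by (simp add: A_def B_def P_def Q dWu dWv dW field_simps power2_eq_square)
  have "Q * (A * F2 + B * F3 - \<alpha> * F1 * dW) = A * (Q * F2) + B * (Q * F3) - Q * \<alpha> * F1 * dW"
    by (simp add: algebra_simps)
  also have "\<dots> = \<alpha> * F1 * z2 * (Lx * A + Ly * B) + z1 * (P * A + uW * Ly * B) - Q * \<alpha> * F1 * dW"
    unfolding QF2 QF3 by (simp add: algebra_simps)
  also have "\<dots> = Q * (z1 * Wm * dWu / z2)"
    unfolding cramer_dW cramer_dWu using nz(2) by (simp add: field_simps)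
  finally have "A * F2 + B * F3 - \<alpha> * F1 * dW = z1 * Wm * dWu / z2"
    using nz(4) by (simp del: times_divide_eq_right)
  then have "z2 * (A * F2 + B * F3 - \<alpha> * F1 * dW) = z1 * Wm * dWu"
    using nz(2) by simp
  then have momentum: "z2 * (dWu * F2 + dWv * F3 - dW * F4) = z1 * dWu"
    using nz(3) by (simp add: A_def B_def F4 field_simps)
  have energy: "\<alpha> * F1 + uW * F2 + vW * F3 - Wm * F4 = 0"
    using nz(3) by (simp add: F4)
  have mass: "d\<rho> / a * F1 = uW * d\<rho>"
    using nz(1) by (simp add: F1)
  have "dot4 (d\<rho> / a + \<alpha> * dz, z2 * dWu + uW * dz, z2 * dWv + vW * dz, - (z2 * dW + Wm * dz))
      (F1, F2, F3, F4)
      = d\<rho> / a * F1 + dz * (\<alpha> * F1 + uW * F2 + vW * F3 - Wm * F4)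
        + z2 * (dWu * F2 + dWv * F3 - dW * F4)"
    by (simp add: dot4_def algebra_simps)
  then show ?thesis
    unfolding mass energy momentum by simp
qed

lemma fluxFt_entropy_conservative:
  fixes \<Gamma> \<rho>L uL vL pL \<rho>R uR vR pR :: real
  assumes "\<Gamma> > 1" "\<rho>L > 0" "\<rho>R > 0" "pL > 0" "pR > 0"
    and "uL\<^sup>2 + vL\<^sup>2 < 1" "uR\<^sup>2 + vR\<^sup>2 < 1"
  shows "dot4 (jmp4 (entV \<Gamma> \<rho>L uL vL pL) (entV \<Gamma> \<rho>R uR vR pR)) (fluxFt \<Gamma> \<rho>L uL vL pL \<rho>R uR vR pR)
    = jmp (psix \<rho>L uL vL) (psix \<rho>R uR vR)"
proof -
  let ?WL = "lorW uL vL" and ?WR = "lorW uR vR" and ?zL = "\<rho>L / pL" and ?zR = "\<rho>R / pR"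
  have pos: "?WL > 0" "?WR > 0" "?zL > 0" "?zR > 0"
    using assms by (simp_all add: lorW_pos)
  have nz: "lnmean \<rho>L \<rho>R \<noteq> 0" "avg ?zL ?zR \<noteq> 0" "avg ?WL ?WR \<noteq> 0"
      "Qm \<rho>L uL vL pL \<rho>R uR vR pR \<noteq> 0"
    using pos lnmean_pos [OF assms(2,3)] Qm_pos [OF assms(2-7)] by (simp_all add: avg_def)
  have dWu: "jmp (uL * ?WL) (uR * ?WR) = avg ?WL ?WR * jmp uL uR + avg uL uR * jmp ?WL ?WR"
    and dWv: "jmp (vL * ?WL) (vR * ?WR) = avg ?WL ?WR * jmp vL vR + avg vL vR * jmp ?WL ?WR"
    by (simp_all add: jmp_mult add.commute)
  have psi: "jmp (psix \<rho>L uL vL) (psix \<rho>R uR vR)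
      = avg \<rho>L \<rho>R * jmp (uL * ?WL) (uR * ?WR) + avg (uL * ?WL) (uR * ?WR) * jmp \<rho>L \<rho>R"
    using jmp_mult [of \<rho>L "uL * ?WL" \<rho>R "uR * ?WR"] by (simp add: psix_def mult_ac)
  show ?thesis
    unfolding jmp4_entV [OF assms(1-5)] jmp_mult [of ?zL] psi fluxFt_def Let_def
    by (rule entropy_conservative_flux_identity [OF jmp_lorW [OF assms(6,7)] dWu dWv
          Qm_def [unfolded Let_def] nz refl refl refl refl])
qed

lemma fluxFt_self:
  fixes \<Gamma> \<rho> u v p :: real
  assumes "\<Gamma> > 1" "\<rho> > 0" "p > 0" "u\<^sup>2 + v\<^sup>2 < 1"
  shows "fluxFt \<Gamma> \<rho> u v p \<rho> u v p = fluxF \<Gamma> \<rho> u v p"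
proof -
  define W where "W = lorW u v"
  define h where "h = enth \<Gamma> \<rho> p"
  have "W > 0" using assms(4) by (simp add: W_def lorW_pos)
  have W_sq: "W\<^sup>2 * (u\<^sup>2 + v\<^sup>2) = W\<^sup>2 - 1"
    using assms(4) by (simp add: W_def lorW_sq)
  have \<alpha>: "alphaM \<Gamma> \<rho> p \<rho> p = h - p / \<rho>"
    using assms(1-3) by (simp add: alphaM_def h_def enth_def field_simps)
  have Q: "Qm \<rho> u v p \<rho> u v p = \<rho> / p * W\<^sup>2"
    using assms(4) by (simp add: Qm_eq W_def power2_eq_square)
  show ?thesis
    using \<open>W > 0\<close> assms(2,3)
    unfolding fluxFt_def fluxF_def Let_def avg_self lnmean_self lorLx_self [OF assms(4)] lorLy_self [OF assms(4)]
      \<alpha> Q W_def [symmetric] h_def [symmetric]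
    \<comment> \<open>only the energy component needs \<open>W\<^sup>2 (1 - u\<^sup>2 - v\<^sup>2) = 1\<close>\<close>
    by (simp add: field_simps power2_eq_square power3_eq_cube) (use W_sq in algebra)
qed

definition swap_momenta :: "real \<times> real \<times> real \<times> real \<Rightarrow> real \<times> real \<times> real \<times> real" where
  "swap_momenta = (\<lambda>(a, b, c, d). (a, c, b, d))"

lemma dot4_swap_momenta: "dot4 (swap_momenta x) (swap_momenta y) = dot4 x y"
  by (cases x; cases y) (simp add: swap_momenta_def dot4_def)

lemma jmp4_swap_momenta: "jmp4 (swap_momenta x) (swap_momenta y) = swap_momenta (jmp4 x y)"
  by (cases x; cases y) (simp add: swap_momenta_def jmp4_def)

lemma entV_swap: "entV \<Gamma> \<rho> v u p = swap_momenta (entV \<Gamma> \<rho> u v p)"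
  by (simp add: entV_def swap_momenta_def lorW_swap)

lemma psiy_swap: "psiy \<rho> u v = psix \<rho> v u"
  by (simp add: psix_def psiy_def lorW_swap)

lemma fluxG_swap: "fluxG \<Gamma> \<rho> u v p = swap_momenta (fluxF \<Gamma> \<rho> v u p)"
  by (simp add: fluxF_def fluxG_def swap_momenta_def Let_def lorW_swap)

lemma Qm_swap: "Qm \<rho>L vL uL pL \<rho>R vR uR pR = Qm \<rho>L uL vL pL \<rho>R uR vR pR"
  \<comment> \<open>the swap rules are permutative, so they are instantiated to keep \<open>unfolding\<close> from looping\<close>
  unfolding Qm_def Let_def lorW_swap [of vL uL] lorW_swap [of vR uR]
    lorLx_swap [of vL uL vR uR] lorLy_swap [of vL uL vR uR]
  by (simp only: diff_conv_add_uminus add_ac)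

lemma fluxGt_swap:
  "fluxGt \<Gamma> \<rho>L uL vL pL \<rho>R uR vR pR = swap_momenta (fluxFt \<Gamma> \<rho>L vL uL pL \<rho>R vR uR pR)"
  unfolding fluxFt_def fluxGt_def Let_def lorW_swap [of vL uL] lorW_swap [of vR uR]
    lorLx_swap [of vL uL vR uR] lorLy_swap [of vL uL vR uR] Qm_swap [of \<rho>L vL uL pL \<rho>R vR uR pR]
  by (simp only: swap_momenta_def prod.case add_ac)

lemma fluxGt_entropy_conservative:
  fixes \<Gamma> \<rho>L uL vL pL \<rho>R uR vR pR :: real
  assumes "\<Gamma> > 1" "\<rho>L > 0" "\<rho>R > 0" "pL > 0" "pR > 0"
    and "uL\<^sup>2 + vL\<^sup>2 < 1" "uR\<^sup>2 + vR\<^sup>2 < 1"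
  shows "dot4 (jmp4 (entV \<Gamma> \<rho>L uL vL pL) (entV \<Gamma> \<rho>R uR vR pR)) (fluxGt \<Gamma> \<rho>L uL vL pL \<rho>R uR vR pR)
    = jmp (psiy \<rho>L uL vL) (psiy \<rho>R uR vR)"
  using fluxFt_entropy_conservative [of \<Gamma> \<rho>L \<rho>R pL pR vL uL vR uR] assms
  by (simp add: entV_swap [of _ _ uL vL] entV_swap [of _ _ uR vR] jmp4_swap_momenta dot4_swap_momenta
      fluxGt_swap psiy_swap add.commute)

lemma fluxGt_self:
  fixes \<Gamma> \<rho> u v p :: real
  assumes "\<Gamma> > 1" "\<rho> > 0" "p > 0" "u\<^sup>2 + v\<^sup>2 < 1"
  shows "fluxGt \<Gamma> \<rho> u v p \<rho> u v p = fluxG \<Gamma> \<rho> u v p"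
  using fluxFt_self [of \<Gamma> \<rho> p v u] assms by (simp add: fluxGt_swap fluxG_swap add.commute)

theorem mainTheorem2:
  fixes \<Gamma> \<rho>L uL vL pL \<rho>R uR vR pR :: real
  assumes "\<Gamma> > 1"
    and "\<rho>L > 0" and "\<rho>R > 0" and "pL > 0" and "pR > 0"
    and "uL\<^sup>2 + vL\<^sup>2 < 1" and "uR\<^sup>2 + vR\<^sup>2 < 1"
  shows "Qm \<rho>L uL vL pL \<rho>R uR vR pR = avg (\<rho>L / pL) (\<rho>R / pR) * lorW uL vL * lorW uR vR
     \<and> Qm \<rho>L uL vL pL \<rho>R uR vR pR > 0
     \<and> dot4 (jmp4 (entV \<Gamma> \<rho>L uL vL pL) (entV \<Gamma> \<rho>R uR vR pR))
            (fluxFt \<Gamma> \<rho>L uL vL pL \<rho>R uR vR pR) = jmp (psix \<rho>L uL vL) (psix \<rho>R uR vR)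
     \<and> dot4 (jmp4 (entV \<Gamma> \<rho>L uL vL pL) (entV \<Gamma> \<rho>R uR vR pR))
            (fluxGt \<Gamma> \<rho>L uL vL pL \<rho>R uR vR pR) = jmp (psiy \<rho>L uL vL) (psiy \<rho>R uR vR)
     \<and> ((\<rho>L = \<rho>R \<and> uL = uR \<and> vL = vR \<and> pL = pR) \<longrightarrow>
          fluxFt \<Gamma> \<rho>L uL vL pL \<rho>R uR vR pR = fluxF \<Gamma> \<rho>L uL vL pL
        \<and> fluxGt \<Gamma> \<rho>L uL vL pL \<rho>R uR vR pR = fluxG \<Gamma> \<rho>L uL vL pL)"
proof -
  have "Qm \<rho>L uL vL pL \<rho>R uR vR pR = avg (\<rho>L / pL) (\<rho>R / pR) * lorW uL vL * lorW uR vR"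
    using assms(6,7) by (rule Qm_eq)
  moreover have "Qm \<rho>L uL vL pL \<rho>R uR vR pR > 0"
    using assms(2-7) by (rule Qm_pos)
  moreover note fluxFt_entropy_conservative [OF assms] fluxGt_entropy_conservative [OF assms]
  moreover have "(\<rho>L = \<rho>R \<and> uL = uR \<and> vL = vR \<and> pL = pR) \<longrightarrow>
      fluxFt \<Gamma> \<rho>L uL vL pL \<rho>R uR vR pR = fluxF \<Gamma> \<rho>L uL vL pL
      \<and> fluxGt \<Gamma> \<rho>L uL vL pL \<rho>R uR vR pR = fluxG \<Gamma> \<rho>L uL vL pL"
    using fluxFt_self [OF assms(1,2,4,6)] fluxGt_self [OF assms(1,2,4,6)] by auto
  ultimately show ?thesis
    by blast
qed

end
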